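(* Let $V$ be a finite set of voters and let $O_1,O_2,\dots,O_k$ be a sequence of delegation operations with pairwise distinct times $t_1<t_2<\dots<t_k$, where each $O_i$ is a pair $(v_i,d_i)$ with $v_i\in V$ and $d_i\in V\cup\{\bot\}$ ($d_i=\bot$ meaning undelegation). For a time $t$, the state graph $G_t$ is the directed graph on $V$ containing, for each voter $v$ having at least one operation at time $<t$, the edge $v\to d$ where $(v,d)$ is the latest such operation, if $d\neq\bot$. The final graph $G$ is $G_{\infty}$; each edge of $G$ carries the time of the operation that produced it. Apply the following deletion procedure to $G$: while $G$ contains a directed cycle, choose a directed cycle and delete its edge with the latest time. Suppose $O_i=(v_i,d_i)$ with $d_i\neq\bot$ is the last operation of voter $v_i$ (so $v_i\to d_i$ is an edge of $G$), and suppose that the graph $G_{t_i}$ together with the edge $v_i\to d_i$ contains no directed cycle through $v_i\to d_i$. Then the edge $v_i\to d_i$ is never deleted by the deletion procedure.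
   Context: Each voter appoints at most one delegate at any time, so every state graph has out-degree at most one at every vertex. The hypothesis on $O_i$ expresses that the voter's delegation, checked against the current delegate graph at the moment it was submitted, did not create a cycle. *)

theory Defs
  imports Main "HOL-Library.Extended_Real"
begin

text \<open>Operations: list of pairs (voter, delegate option); None = undelegation.
  Operation j happens at time t j (t strictly increasing on the indices).\<close>

type_synonym 'v op = "'v \<times> 'v option"

definition state_graph :: "'v op list \<Rightarrow> (nat \<Rightarrow> real) \<Rightarrow> ereal \<Rightarrow> 'v rel" where
  "state_graph ops t tau = {(v, d). \<exists>j < length ops. ereal (t j) < tau \<and> ops ! j = (v, Some d) \<and>
      (\<forall>j' < length ops. ereal (t j') < tau \<and> fst (ops ! j') = v \<longrightarrow> t j' \<le> t j)}"

definition final_graph :: "'v op list \<Rightarrow> (nat \<Rightarrow> real) \<Rightarrow> 'v rel" where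
  "final_graph ops t = state_graph ops t \<infinity>"

definition edge_time :: "'v op list \<Rightarrow> (nat \<Rightarrow> real) \<Rightarrow> 'v \<times> 'v \<Rightarrow> real" where
  "edge_time ops t e = t (GREATEST j. j < length ops \<and> fst (ops ! j) = fst e)"

definition cycle_edges :: "'v list \<Rightarrow> 'v rel" where
  "cycle_edges xs = {(xs ! j, xs ! (Suc j mod length xs)) | j. j < length xs}"

definition is_cycle :: "'v rel \<Rightarrow> 'v list \<Rightarrow> bool" where
  "is_cycle E xs \<longleftrightarrow> xs \<noteq> [] \<and> distinct xs \<and> cycle_edges xs \<subseteq> E"

definition del_step :: "('v \<times> 'v \<Rightarrow> real) \<Rightarrow> 'v rel \<Rightarrow> 'v rel \<Rightarrow> bool" where
  "del_step tm E E' \<longleftrightarrow> (\<exists>xs e. is_cycle E xs \<and> e \<in> cycle_edges xs \<and>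
      (\<forall>e' \<in> cycle_edges xs. tm e' \<le> tm e) \<and> E' = E - {e})"

end

theory Submission
  imports Defs
begin

text \<open>An edge of the final graph whose time does not exceed the time of the edge \<open>(v, d)\<close>
  was already present when \<open>(v, d)\<close> was created, or is that edge itself. Hence a cycle in
  which \<open>(v, d)\<close> is the latest edge would already be a cycle of the state graph at that
  moment extended by \<open>(v, d)\<close>, which the hypothesis excludes. Since deletion only removes
  edges, no cycle arising during the procedure can select \<open>(v, d)\<close> as its latest edge.\<close>

definition is_last_op :: "'v op list \<Rightarrow> nat \<Rightarrow> 'v \<Rightarrow> bool" where
  "is_last_op ops j u \<longleftrightarrow> j < length ops \<and> fst (ops ! j) = u \<and>
     (\<forall>j' < length ops. fst (ops ! j') = u \<longrightarrow> j' \<le> j)"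

lemma edge_time_last_op:
  assumes "is_last_op ops j (fst e)"
  shows "edge_time ops t e = t j"
  using assms unfolding edge_time_def is_last_op_def by (metis (mono_tags, lifting) Greatest_equality)

lemma final_graph_last_op:
  assumes t_mono: "\<forall>j j'. j < j' \<and> j' < length ops \<longrightarrow> t j < t j'"
    and "(u, x) \<in> final_graph ops t"
  obtains j where "is_last_op ops j u" and "ops ! j = (u, Some x)"
proof -
  from assms(2) obtain j where j: "j < length ops" "ops ! j = (u, Some x)"
    and latest: "\<forall>j' < length ops. fst (ops ! j') = u \<longrightarrow> t j' \<le> t j"
    unfolding final_graph_def state_graph_def by auto
  have "j' \<le> j" if "j' < length ops" "fst (ops ! j') = u" for j'
  proof (rule ccontr)
    assume "\<not> j' \<le> j"
    then have "t j < t j'" using t_mono that(1) by simp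
    with latest that show False by fastforce
  qed
  with j that show thesis unfolding is_last_op_def by auto
qed

lemma last_op_in_final_graph:
  assumes t_mono: "\<forall>j j'. j < j' \<and> j' < length ops \<longrightarrow> t j < t j'"
    and "is_last_op ops j u" and "ops ! j = (u, Some x)"
  shows "(u, x) \<in> final_graph ops t"
proof -
  have "t j' \<le> t j" if "j' < length ops" "fst (ops ! j') = u" for j'
    using assms that unfolding is_last_op_def by (metis le_less)
  with assms show ?thesis
    unfolding final_graph_def state_graph_def is_last_op_def by auto
qed

lemma final_graph_edge_no_later_than:
  assumes t_mono: "\<forall>j j'. j < j' \<and> j' < length ops \<longrightarrow> t j < t j'"
    and "i < length ops" and "ops ! i = (v, Some d)"
    and "e \<in> final_graph ops t" and "edge_time ops t e \<le> t i"
  shows "e \<in> state_graph ops t (ereal (t i)) \<union> {(v, d)}"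
proof -
  obtain u x where e: "e = (u, x)" by fastforce
  with assms(4) t_mono obtain j where last: "is_last_op ops j u" and j: "ops ! j = (u, Some x)"
    using final_graph_last_op by metis
  from last e have "t j \<le> t i"
    using assms(5) edge_time_last_op by fastforce
  then consider "j = i" | "j < i"
    using t_mono assms(2) last unfolding is_last_op_def by (metis leD linorder_neqE_nat)
  then show ?thesis
  proof cases
    case 1
    with j e assms(3) show ?thesis by simp
  next
    case 2
    have "t j' \<le> t j" if "j' < length ops" "fst (ops ! j') = u" for j'
      using last that t_mono unfolding is_last_op_def by (metis le_less)
    moreover have "t j < t i" using 2 t_mono assms(2) by blast
    ultimately have "e \<in> state_graph ops t (ereal (t i))"
      using last j e unfolding state_graph_def is_last_op_def by auto
    then show ?thesis by simp
  qed
qed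

lemma del_steps_subset:
  assumes "(del_step tm)\<^sup>*\<^sup>* E0 E"
  shows "E \<subseteq> E0"
  using assms by induction (auto simp: del_step_def)

lemma del_steps_keep_edge:
  assumes "e \<in> E0"
    and not_latest: "\<And>xs. is_cycle E0 xs \<Longrightarrow> e \<in> cycle_edges xs \<Longrightarrow> \<exists>e' \<in> cycle_edges xs. tm e < tm e'"
    and "(del_step tm)\<^sup>*\<^sup>* E0 E"
  shows "e \<in> E"
  using assms(3)
proof (induction rule: rtranclp_induct)
  case base
  show ?case by (fact assms(1))
next
  case (step E1 E2)
  from step.hyps(2) obtain xs e1 where cycle: "is_cycle E1 xs" and "e1 \<in> cycle_edges xs"
    and latest: "\<forall>e' \<in> cycle_edges xs. tm e' \<le> tm e1" and E2: "E2 = E1 - {e1}"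
    unfolding del_step_def by blast
  have "e1 \<noteq> e"
  proof
    assume "e1 = e"
    have "is_cycle E0 xs"
      using cycle del_steps_subset[OF step.hyps(1)] unfolding is_cycle_def by blast
    with not_latest \<open>e1 \<in> cycle_edges xs\<close> \<open>e1 = e\<close> latest show False by force
  qed
  with step.IH E2 show ?case by simp
qed

theorem mainTheorem2:
  fixes V :: "'v set" and ops :: "'v op list" and t :: "nat \<Rightarrow> real"
    and i :: nat and v d :: 'v and E :: "'v rel"
  assumes "finite V"
    and "\<forall>(u, x) \<in> set ops. u \<in> V \<and> (\<forall>y. x = Some y \<longrightarrow> y \<in> V)"
    and "\<forall>j j'. j < j' \<and> j' < length ops \<longrightarrow> t j < t j'"
    and "i < length ops" and "ops ! i = (v, Some d)"
    and "\<forall>j. i < j \<and> j < length ops \<longrightarrow> fst (ops ! j) \<noteq> v"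
    and "\<not> (\<exists>xs. is_cycle (state_graph ops t (ereal (t i)) \<union> {(v, d)}) xs
                  \<and> (v, d) \<in> cycle_edges xs)"
    and "(del_step (edge_time ops t))\<^sup>*\<^sup>* (final_graph ops t) E"
  shows "(v, d) \<in> E"
proof (rule del_steps_keep_edge[OF _ _ assms(8)])
  have last: "is_last_op ops i v"
    using assms(4-6) unfolding is_last_op_def by (metis fst_conv leI)
  then show "(v, d) \<in> final_graph ops t"
    using last_op_in_final_graph assms(3,5) by metis
  fix xs
  assume cycle: "is_cycle (final_graph ops t) xs" and on_cycle: "(v, d) \<in> cycle_edges xs"
  show "\<exists>e' \<in> cycle_edges xs. edge_time ops t (v, d) < edge_time ops t e'"
  proof (rule ccontr)
    assume "\<not> ?thesis"
    with last have "edge_time ops t e' \<le> t i" if "e' \<in> cycle_edges xs" for e'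
      using that edge_time_last_op[of ops i "(v, d)" t] by force
    then have "cycle_edges xs \<subseteq> state_graph ops t (ereal (t i)) \<union> {(v, d)}"
      using cycle final_graph_edge_no_later_than[OF assms(3-5)] unfolding is_cycle_def by blast
    with cycle on_cycle assms(7) show False unfolding is_cycle_def by blast
  qed
qed

end
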